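(* Let $\{\hat f_n\}_{n\in\mathbb N}\subset L_0(\hat\nabla,\hat\mu)$, and for each $n$ let $\omega\mapsto f_n(\omega)\in L_0(\nabla_\omega,\mu_\omega)$ be the measurable section representing $\hat f_n$. Then $\inf_{n}\hat f_n$ exists in $L_0(\hat\nabla,\hat\mu)$ if and only if $\inf_n f_n(\omega)$ exists in $L_0(\nabla_\omega,\mu_\omega)$ for $\lambda$-almost every $\omega\in\Omega$. In that case $\big(\inf_n \hat f_n\big)(\omega)=\inf_n f_n(\omega)$ for $\lambda$-almost every $\omega\in\Omega$.
   Context: $(\Omega,\Sigma,\lambda)$ is a measure space with finite measure $\lambda$; $L_0(\Omega)$ is the algebra of (classes of a.e. equal) measurable real functions on $\Omega$. For each $\omega\in\Omega$, $\nabla_\omega$ is a complete Boolean algebra carrying a strictly positive finite real-valued measure $\mu_\omega$, with metric $\rho_\omega(e,g)=\mu_\omega(e\,\Delta\, g)$. The assignment $\omega\mapsto\nabla_\omega$ together with a set $L$ of sections forms a measurable bundle of Boolean algebras over $\Omega$. $\hat\nabla$ denotes the complete Boolean algebra of classes (modulo a.e. equality) of measurable sections $\omega\mapsto e(\omega)\in\nabla_\omega$, and $\hat\mu:\hat\nabla\to L_0(\Omega)$ is the strictly positive $L_0(\Omega)$-valued measure given by $\hat\mu(\hat e)=$ the class of $\omega\mapsto\mu_\omega(e(\omega))$. $L_0(\hat\nabla,\hat\mu)$ is the order complete vector lattice $C_\infty(Q(\hat\nabla))$, and $L_0(\nabla_\omega,\mu_\omega)$ is the usual space of measurable functions (mod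 null sets) over $(\nabla_\omega,\mu_\omega)$ with metric $\rho_\omega(a,b)=\int\frac{|a-b|}{1+|a-b|}d\mu_\omega$. It is known that $L_0(\hat\nabla,\hat\mu)$ is identified with the space of classes (mod a.e. equality) of measurable sections $\omega\mapsto f(\omega)\in L_0(\nabla_\omega,\mu_\omega)$; under this identification $\hat f$ corresponds to a section $\omega\mapsto f(\omega)$, and $\hat f\le\hat g$ iff $f(\omega)\le g(\omega)$ for a.e. $\omega$. *)

theory Defs
  imports "HOL-Analysis.Analysis"
begin

text \<open>
  Each fibre Boolean algebra \<nabla>_\<omega> with its strictly positive finite measure \<mu>_\<omega>
  is realised as the measure algebra of a finite measure space M \<omega>
  (elements: sets of M \<omega> modulo null sets).  L_0(\<nabla>_\<omega>,\<mu>_\<omega>) is then the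
  space of real Borel functions on M \<omega> modulo a.e. equality.
\<close>

definition rho :: "'b measure \<Rightarrow> 'b set \<Rightarrow> 'b set \<Rightarrow> real" where
  "rho N e g = measure N ((e - g) \<union> (g - e))"

definition bool_bundle :: "'a measure \<Rightarrow> ('a \<Rightarrow> 'b measure) \<Rightarrow> ('a \<Rightarrow> 'b set) set \<Rightarrow> bool" where
  "bool_bundle \<Lambda> M L \<longleftrightarrow>
     finite_measure \<Lambda> \<and>
     (\<forall>\<omega>\<in>space \<Lambda>. finite_measure (M \<omega>)) \<and>
     (\<forall>e\<in>L. \<forall>\<omega>\<in>space \<Lambda>. e \<omega> \<in> sets (M \<omega>)) \<and>
     (\<lambda>\<omega>. {}) \<in> L \<and>
     (\<forall>e\<in>L. \<forall>g\<in>L. (\<lambda>\<omega>. e \<omega> \<union> g \<omega>) \<in> L) \<and>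
     (\<forall>e\<in>L. (\<lambda>\<omega>. space (M \<omega>) - e \<omega>) \<in> L) \<and>
     (\<forall>e\<in>L. (\<lambda>\<omega>. measure (M \<omega>) (e \<omega>)) \<in> borel_measurable \<Lambda>) \<and>
     (\<forall>\<omega>\<in>space \<Lambda>. \<forall>A\<in>sets (M \<omega>). \<forall>\<epsilon>>0. \<exists>e\<in>L. rho (M \<omega>) (e \<omega>) A < \<epsilon>)"

definition step_section :: "'a measure \<Rightarrow> ('a \<Rightarrow> 'b set) set \<Rightarrow> ('a \<Rightarrow> 'b set) \<Rightarrow> bool" where
  "step_section \<Lambda> L s \<longleftrightarrow>
     (\<exists>n::nat. \<exists>A c. (\<forall>i<n. A i \<in> sets \<Lambda> \<and> c i \<in> L) \<and> disjoint_family_on A {..<n} \<and>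
        (\<Union>i<n. A i) = space \<Lambda> \<and> (\<forall>i<n. \<forall>\<omega>\<in>A i. s \<omega> = c i \<omega>))"

definition meas_bool_section ::
  "'a measure \<Rightarrow> ('a \<Rightarrow> 'b measure) \<Rightarrow> ('a \<Rightarrow> 'b set) set \<Rightarrow> ('a \<Rightarrow> 'b set) \<Rightarrow> bool" where
  "meas_bool_section \<Lambda> M L e \<longleftrightarrow>
     (\<forall>\<omega>\<in>space \<Lambda>. e \<omega> \<in> sets (M \<omega>)) \<and>
     (\<exists>s. (\<forall>k. step_section \<Lambda> L (s k)) \<and>
          (AE \<omega> in \<Lambda>. (\<lambda>k. rho (M \<omega>) (s k \<omega>) (e \<omega>)) \<longlonglongrightarrow> 0))"

text \<open>Measurable sections \<omega> \<mapsto> f(\<omega>) \<in> L_0(\<nabla>_\<omega>,\<mu>_\<omega>): all spectral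
  idempotents [f(\<omega>) < t] form measurable sections of the Boolean bundle.\<close>
definition L0_section ::
  "'a measure \<Rightarrow> ('a \<Rightarrow> 'b measure) \<Rightarrow> ('a \<Rightarrow> 'b set) set \<Rightarrow> ('a \<Rightarrow> 'b \<Rightarrow> real) \<Rightarrow> bool" where
  "L0_section \<Lambda> M L f \<longleftrightarrow>
     (\<forall>\<omega>\<in>space \<Lambda>. f \<omega> \<in> borel_measurable (M \<omega>)) \<and>
     (\<forall>t::real. meas_bool_section \<Lambda> M L (\<lambda>\<omega>. {x \<in> space (M \<omega>). f \<omega> x < t}))"

definition is_inf_L0 :: "'b measure \<Rightarrow> (nat \<Rightarrow> 'b \<Rightarrow> real) \<Rightarrow> ('b \<Rightarrow> real) \<Rightarrow> bool" where
  "is_inf_L0 N F h \<longleftrightarrow>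
     h \<in> borel_measurable N \<and>
     (\<forall>n. AE x in N. h x \<le> F n x) \<and>
     (\<forall>g\<in>borel_measurable N. (\<forall>n. AE x in N. g x \<le> F n x) \<longrightarrow> (AE x in N. g x \<le> h x))"

text \<open>Order on L_0(\<nabla>^,\<mu>^) identified with classes of measurable sections:
  f^ \<le> g^ iff f(\<omega>) \<le> g(\<omega>) in L_0(\<nabla>_\<omega>,\<mu>_\<omega>) for a.e. \<omega>.\<close>
definition hat_le :: "'a measure \<Rightarrow> ('a \<Rightarrow> 'b measure) \<Rightarrow> ('a \<Rightarrow> 'b \<Rightarrow> real) \<Rightarrow> ('a \<Rightarrow> 'b \<Rightarrow> real) \<Rightarrow> bool" where
  "hat_le \<Lambda> M f g \<longleftrightarrow> (AE \<omega> in \<Lambda>. AE x in M \<omega>. f \<omega> x \<le> g \<omega> x)"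

definition is_inf_hat ::
  "'a measure \<Rightarrow> ('a \<Rightarrow> 'b measure) \<Rightarrow> ('a \<Rightarrow> 'b set) set \<Rightarrow> (nat \<Rightarrow> 'a \<Rightarrow> 'b \<Rightarrow> real) \<Rightarrow> ('a \<Rightarrow> 'b \<Rightarrow> real) \<Rightarrow> bool" where
  "is_inf_hat \<Lambda> M L F g \<longleftrightarrow>
     L0_section \<Lambda> M L g \<and>
     (\<forall>n. hat_le \<Lambda> M g (F n)) \<and>
     (\<forall>h. L0_section \<Lambda> M L h \<and> (\<forall>n. hat_le \<Lambda> M h (F n)) \<longrightarrow> hat_le \<Lambda> M h g)"

end

theory Submission
  imports Defs
begin

text \<open>
  Let \<open>m \<omega> x = (INF n. f n \<omega> x)\<close> be the pointwise infimum, taken in the extended reals.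
  Measurable sections of the Boolean bundle are closed under complements and countable unions
  (a countable union is the a.e. limit of its finite partial unions, and a.e. limits of measurable
  sections are measurable by a diagonal Borel--Cantelli argument), so every spectral set
  \<open>[m < t] = \<Union>n. [f n < t]\<close> is a measurable section.  Consequently, whenever \<open>m\<close> is a.e. finite, \<open>m\<close>
  itself is an \<open>L\<^sub>0\<close>-section, and it is then the infimum both in \<open>L\<^sub>0(\<nabla>^,\<mu>^)\<close> and in almost
  every fibre.  Conversely, if \<open>g\<close> is the infimum in \<open>L\<^sub>0(\<nabla>^,\<mu>^)\<close>, then \<open>max g m\<close> is again an
  \<open>L\<^sub>0\<close>-section below every \<open>f n\<close>, hence below \<open>g\<close>; so \<open>g = m\<close> almost everywhere in almost every
  fibre.  In a single fibre the infimum exists exactly when \<open>m\<close> is a.e. finite, and then equals \<open>m\<close>.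
\<close>

subsection \<open>Symmetric-difference distance\<close>

lemma rho_nonneg: "0 \<le> rho N a b"
  by (simp add: rho_def)

lemma rho_triangle:
  assumes "finite_measure N" "a \<in> sets N" "b \<in> sets N" "c \<in> sets N"
  shows "rho N a c \<le> rho N a b + rho N b c"
proof -
  interpret finite_measure N by fact
  have "measure N ((a - c) \<union> (c - a)) \<le> measure N (((a - b) \<union> (b - a)) \<union> ((b - c) \<union> (c - b)))"
    using assms by (intro finite_measure_mono) auto
  also have "\<dots> \<le> measure N ((a - b) \<union> (b - a)) + measure N ((b - c) \<union> (c - b))"
    using assms by (intro measure_Un_le) auto
  finally show ?thesis by (simp add: rho_def)
qed

lemma rho_Un_le:
  assumes "finite_measure N" "a \<in> sets N" "b \<in> sets N" "a' \<in> sets N" "b' \<in> sets N"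
  shows "rho N (a \<union> a') (b \<union> b') \<le> rho N a b + rho N a' b'"
proof -
  interpret finite_measure N by fact
  have "measure N (((a \<union> a') - (b \<union> b')) \<union> ((b \<union> b') - (a \<union> a')))
     \<le> measure N (((a - b) \<union> (b - a)) \<union> ((a' - b') \<union> (b' - a')))"
    using assms by (intro finite_measure_mono) auto
  also have "\<dots> \<le> measure N ((a - b) \<union> (b - a)) + measure N ((a' - b') \<union> (b' - a'))"
    using assms by (intro measure_Un_le) auto
  finally show ?thesis by (simp add: rho_def)
qed

lemma rho_compl:
  assumes "a \<subseteq> space N" "b \<subseteq> space N"
  shows "rho N (space N - a) (space N - b) = rho N a b"
proof -
  have "((space N - a) - (space N - b)) \<union> ((space N - b) - (space N - a)) = (a - b) \<union> (b - a)"
    using assms by auto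
  then show ?thesis by (simp add: rho_def)
qed

lemma abs_rho_diff_le:
  assumes "finite_measure N" "a \<in> sets N" "b \<in> sets N" "c \<in> sets N"
  shows "\<bar>rho N a b - rho N a c\<bar> \<le> rho N b c"
proof -
  have "rho N c b = rho N b c"
    by (simp add: rho_def Un_commute)
  then show ?thesis
    using rho_triangle[OF assms(1,2,3,4)] rho_triangle[OF assms(1,2,4,3)] by linarith
qed

lemma rho_tendsto_if_rho_tendsto_0:
  assumes "finite_measure N" "a \<in> sets N" "e \<in> sets N" "\<And>l. w l \<in> sets N"
    and "(\<lambda>l. rho N (w l) e) \<longlonglongrightarrow> 0"
  shows "(\<lambda>l. rho N a (w l)) \<longlonglongrightarrow> rho N a e"
proof -
  have "(\<lambda>l. rho N a (w l) - rho N a e) \<longlonglongrightarrow> 0"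
    using assms(5) by (rule Lim_null_comparison[rotated]) (simp add: abs_rho_diff_le assms)
  then show ?thesis
    by (simp add: LIM_zero_iff)
qed

subsection \<open>Almost-everywhere convergence\<close>

lemma tendsto_0_if_le_add:
  fixes f g h :: "nat \<Rightarrow> real"
  assumes "\<And>k. f k \<le> g k + h k" "\<And>k. 0 \<le> f k" "g \<longlonglongrightarrow> 0" "h \<longlonglongrightarrow> 0"
  shows "f \<longlonglongrightarrow> 0"
proof (rule Lim_null_comparison[OF always_eventually])
  show "\<forall>k. norm (f k) \<le> g k + h k"
    using assms(1,2) by simp
  show "(\<lambda>k. g k + h k) \<longlonglongrightarrow> 0"
    using tendsto_add[OF assms(3,4)] by simp
qed

lemma (in finite_measure) AE_tendsto_imp_tendsto_in_measure:
  fixes X :: "nat \<Rightarrow> 'a \<Rightarrow> real"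
  assumes meas: "\<And>j. X j \<in> borel_measurable M" and ae: "AE x in M. (\<lambda>j. X j x) \<longlonglongrightarrow> 0"
    and "\<epsilon> > 0"
  shows "(\<lambda>j. measure M {x\<in>space M. \<epsilon> \<le> \<bar>X j x\<bar>}) \<longlonglongrightarrow> 0"
proof -
  define B where "B j = (\<Union>l\<in>{j..}. {x\<in>space M. \<epsilon> \<le> \<bar>X l x\<bar>})" for j
  have B_sets: "B j \<in> sets M" for j
    unfolding B_def using meas by (intro sets.countable_UN') auto
  have "decseq B"
    unfolding decseq_def B_def by (auto intro: order_trans)
  have "AE x in M. x \<notin> (\<Inter>j. B j)"
    using ae
  proof eventually_elim
    case (elim x)
    then obtain j where "\<forall>l\<ge>j. \<bar>X l x\<bar> < \<epsilon>"
      using LIMSEQ_D[OF _ \<open>\<epsilon> > 0\<close>] by fastforce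
    then show ?case by (auto simp: B_def not_le[symmetric])
  qed
  then have "(\<Inter>j. B j) \<in> null_sets M"
    using AE_iff_null_sets B_sets by blast
  then have "measure M (\<Inter>j. B j) = 0"
    by (simp add: measure_def null_setsD1)
  then have lim: "(\<lambda>j. measure M (B j)) \<longlonglongrightarrow> 0"
    using finite_Lim_measure_decseq[of B] B_sets \<open>decseq B\<close> by auto
  have "measure M {x\<in>space M. \<epsilon> \<le> \<bar>X j x\<bar>} \<le> measure M (B j)" for j
    using B_sets by (intro finite_measure_mono) (auto simp: B_def)
  then show ?thesis
    by (intro Lim_null_comparison[OF _ lim] always_eventually allI) simp
qed

lemma (in finite_measure) AE_tendsto_diagonal:
  fixes X :: "nat \<Rightarrow> nat \<Rightarrow> 'a \<Rightarrow> real"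
  assumes meas: "\<And>N j. X N j \<in> borel_measurable M"
    and ae: "\<And>N. AE x in M. (\<lambda>j. X N j x) \<longlonglongrightarrow> 0"
  obtains J where "AE x in M. (\<lambda>N. X N (J N) x) \<longlonglongrightarrow> 0"
proof -
  define A where "A N j = {x\<in>space M. inverse (real (Suc N)) \<le> \<bar>X N j x\<bar>}" for N j
  have A_sets: "A N j \<in> sets M" for N j
    unfolding A_def using meas[of N j] by measurable
  have "\<exists>j. measure M (A N j) < (1/2)^N" for N
  proof -
    have "(\<lambda>j. measure M (A N j)) \<longlonglongrightarrow> 0"
      unfolding A_def by (rule AE_tendsto_imp_tendsto_in_measure[OF meas ae]) simp
    then have "eventually (\<lambda>j. measure M (A N j) < (1/2)^N) sequentially"
      by (rule order_tendstoD(2)) simp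
    then show ?thesis
      by (metis eventually_sequentially order_refl)
  qed
  then obtain J where J: "\<And>N. measure M (A N (J N)) < (1/2)^N"
    by metis
  have "AE x in M. eventually (\<lambda>N. x \<in> space M - A N (J N)) sequentially"
  proof (rule borel_cantelli_AE1[OF A_sets])
    show "emeasure M (A N (J N)) < \<infinity>" for N
      by (simp add: less_top[symmetric])
    show "summable (\<lambda>N. measure M (A N (J N)))"
      using J by (intro summable_comparison_test'[OF summable_geometric[of "1/2"]]) (auto intro: less_imp_le)
  qed
  then have "AE x in M. (\<lambda>N. X N (J N) x) \<longlonglongrightarrow> 0"
  proof eventually_elim
    case (elim x)
    then have "eventually (\<lambda>N. norm (X N (J N) x) \<le> inverse (real (Suc N))) sequentially"
      by (rule eventually_mono) (auto simp: A_def)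
    then show ?case
      using LIMSEQ_inverse_real_of_nat by (rule Lim_null_comparison)
  qed
  then show ?thesis
    by (rule that)
qed

subsection \<open>Infima in \<open>L\<^sub>0\<close>\<close>

lemma ereal_real_of_ereal_max:
  "b \<le> ereal c \<Longrightarrow> ereal (real_of_ereal (max (ereal a) b)) = max (ereal a) b"
  by (cases b) (auto simp: max_def)

lemma ereal_eq_MInfty_iff_less_all:
  fixes b :: ereal
  shows "b = -\<infinity> \<longleftrightarrow> (\<forall>k::nat. b < ereal (- real k))"
proof (cases b)
  case (real r)
  obtain k :: nat where "- r \<le> real k"
    using real_arch_simple[of "- r"] by blast
  then have "\<not> b < ereal (- real k)"
    using real by simp
  then show ?thesis
    using real by auto
qed auto

lemma is_inf_L0_iff_AE_eq_INF:
  fixes F :: "nat \<Rightarrow> 'b \<Rightarrow> real"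
  assumes F: "\<And>n. F n \<in> borel_measurable N"
  shows "is_inf_L0 N F h \<longleftrightarrow>
    h \<in> borel_measurable N \<and> (AE x in N. ereal (h x) = (INF n. ereal (F n x)))"
proof
  assume inf: "is_inf_L0 N F h"
  then have h_borel: "h \<in> borel_measurable N" and h_le: "\<And>n. AE x in N. h x \<le> F n x"
    unfolding is_inf_L0_def by blast+
  \<comment> \<open>\<open>u = max h (INF n. F n)\<close> is again a lower bound, so \<open>u \<le> h\<close>, i.e. \<open>INF n. F n \<le> h\<close> a.e.\<close>
  define u where "u x = real_of_ereal (max (ereal (h x)) (INF n. ereal (F n x)))" for x
  have u_eq: "ereal (u x) = max (ereal (h x)) (INF n. ereal (F n x))" for x
  proof -
    have "(INF n. ereal (F n x)) \<le> ereal (F 0 x)"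
      by (rule INF_lower) simp
    then show ?thesis
      unfolding u_def by (rule ereal_real_of_ereal_max)
  qed
  have u_borel: "u \<in> borel_measurable N"
    unfolding u_def using h_borel F by measurable
  have "AE x in N. u x \<le> F n x" for n
    using h_le[of n]
  proof eventually_elim
    case (elim x)
    have "ereal (u x) \<le> ereal (F n x)"
      unfolding u_eq using elim by (intro max.boundedI INF_lower) simp_all
    then show ?case
      by simp
  qed
  then have "AE x in N. u x \<le> h x"
    using inf u_borel unfolding is_inf_L0_def by blast
  moreover have "AE x in N. \<forall>n. h x \<le> F n x"
    using h_le by (simp add: AE_all_countable)
  ultimately have "AE x in N. ereal (h x) = (INF n. ereal (F n x))"
  proof eventually_elim
    case (elim x)
    have "(INF n. ereal (F n x)) \<le> ereal (u x)"
      unfolding u_eq by simp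
    also have "\<dots> \<le> ereal (h x)"
      using elim(1) by simp
    finally show ?case
      using elim(2) by (intro antisym INF_greatest) simp_all
  qed
  with h_borel show "h \<in> borel_measurable N \<and> (AE x in N. ereal (h x) = (INF n. ereal (F n x)))"
    by blast
next
  assume "h \<in> borel_measurable N \<and> (AE x in N. ereal (h x) = (INF n. ereal (F n x)))"
  then have h_borel: "h \<in> borel_measurable N" and h_eq: "AE x in N. ereal (h x) = (INF n. ereal (F n x))"
    by blast+
  show "is_inf_L0 N F h"
    unfolding is_inf_L0_def
  proof (intro conjI allI ballI impI h_borel)
    fix n
    show "AE x in N. h x \<le> F n x"
      using h_eq
    proof eventually_elim
      case (elim x)
      have "ereal (h x) \<le> ereal (F n x)"
        unfolding elim by (rule INF_lower) simp
      then show ?case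
        by simp
    qed
  next
    fix g assume "\<forall>n. AE x in N. g x \<le> F n x"
    then have "AE x in N. \<forall>n. g x \<le> F n x"
      by (simp add: AE_all_countable)
    then show "AE x in N. g x \<le> h x"
      using h_eq
    proof eventually_elim
      case (elim x)
      have "ereal (g x) \<le> ereal (h x)"
        unfolding elim(2) using elim(1) by (intro INF_greatest) simp
      then show ?case
        by simp
    qed
  qed
qed

lemma is_inf_hat_if_AE_eq_INF:
  assumes g: "L0_section \<Lambda> M L g"
    and g_eq: "AE \<omega> in \<Lambda>. AE x in M \<omega>. ereal (g \<omega> x) = (INF n. ereal (f n \<omega> x))"
  shows "is_inf_hat \<Lambda> M L f g"
  unfolding is_inf_hat_def
proof (intro conjI allI impI g)
  fix n
  show "hat_le \<Lambda> M g (f n)"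
    unfolding hat_le_def using g_eq
  proof eventually_elim
    case (elim \<omega>)
    then show ?case
    proof eventually_elim
      case (elim x)
      have "ereal (g \<omega> x) \<le> ereal (f n \<omega> x)"
        unfolding elim by (rule INF_lower) simp
      then show ?case
        by simp
    qed
  qed
next
  fix u assume "L0_section \<Lambda> M L u \<and> (\<forall>n. hat_le \<Lambda> M u (f n))"
  then have "AE \<omega> in \<Lambda>. AE x in M \<omega>. \<forall>n. u \<omega> x \<le> f n \<omega> x"
    unfolding hat_le_def by (simp add: AE_all_countable)
  then show "hat_le \<Lambda> M u g"
    unfolding hat_le_def using g_eq
  proof eventually_elim
    case (elim \<omega>)
    then show ?case
    proof eventually_elim
      case (elim x)
      have "ereal (u \<omega> x) \<le> ereal (g \<omega> x)"
        unfolding elim(2) using elim(1) by (intro INF_greatest) simp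
      then show ?case
        by simp
    qed
  qed
qed

subsection \<open>Sections of a measurable bundle of Boolean algebras\<close>

locale boolean_bundle =
  fixes \<Lambda> :: "'a measure" and M :: "'a \<Rightarrow> 'b measure" and L :: "('a \<Rightarrow> 'b set) set"
  assumes bool_bundle: "bool_bundle \<Lambda> M L"
begin

lemma finite_measure_base: "finite_measure \<Lambda>"
  using bool_bundle by (simp add: bool_bundle_def)

lemma finite_measure_fibre: "\<omega> \<in> space \<Lambda> \<Longrightarrow> finite_measure (M \<omega>)"
  using bool_bundle by (simp add: bool_bundle_def)

lemma L_sets: "e \<in> L \<Longrightarrow> \<omega> \<in> space \<Lambda> \<Longrightarrow> e \<omega> \<in> sets (M \<omega>)"
  using bool_bundle by (simp add: bool_bundle_def)

lemma L_empty: "(\<lambda>\<omega>. {}) \<in> L"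
  using bool_bundle by (simp add: bool_bundle_def)

lemma L_Un: "e \<in> L \<Longrightarrow> g \<in> L \<Longrightarrow> (\<lambda>\<omega>. e \<omega> \<union> g \<omega>) \<in> L"
  using bool_bundle by (simp add: bool_bundle_def)

lemma L_compl: "e \<in> L \<Longrightarrow> (\<lambda>\<omega>. space (M \<omega>) - e \<omega>) \<in> L"
  using bool_bundle by (simp add: bool_bundle_def)

lemma L_measure_borel: "e \<in> L \<Longrightarrow> (\<lambda>\<omega>. measure (M \<omega>) (e \<omega>)) \<in> borel_measurable \<Lambda>"
  using bool_bundle by (simp add: bool_bundle_def)

lemma L_Diff:
  assumes e: "e \<in> L" and g: "g \<in> L"
  shows "\<exists>h\<in>L. \<forall>\<omega>\<in>space \<Lambda>. h \<omega> = e \<omega> - g \<omega>"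
proof
  show "(\<lambda>\<omega>. space (M \<omega>) - ((space (M \<omega>) - e \<omega>) \<union> g \<omega>)) \<in> L"
    using e g by (intro L_compl L_Un)
  show "\<forall>\<omega>\<in>space \<Lambda>. space (M \<omega>) - ((space (M \<omega>) - e \<omega>) \<union> g \<omega>) = e \<omega> - g \<omega>"
    using L_sets[OF e] sets.sets_into_space by blast
qed

lemma L_symdiff:
  assumes "e \<in> L" "g \<in> L"
  shows "\<exists>h\<in>L. \<forall>\<omega>\<in>space \<Lambda>. h \<omega> = (e \<omega> - g \<omega>) \<union> (g \<omega> - e \<omega>)"
proof -
  obtain h1 h2 where "h1 \<in> L" "\<forall>\<omega>\<in>space \<Lambda>. h1 \<omega> = e \<omega> - g \<omega>"
    and "h2 \<in> L" "\<forall>\<omega>\<in>space \<Lambda>. h2 \<omega> = g \<omega> - e \<omega>"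
    using L_Diff assms by metis
  then show ?thesis
    by (intro bexI[of _ "\<lambda>\<omega>. h1 \<omega> \<union> h2 \<omega>"] L_Un) auto
qed

lemma step_sectionE:
  assumes "step_section \<Lambda> L s"
  obtains n :: nat and A c where "\<And>i. i < n \<Longrightarrow> A i \<in> sets \<Lambda>" "\<And>i. i < n \<Longrightarrow> c i \<in> L"
    "disjoint_family_on A {..<n}" "(\<Union>i<n. A i) = space \<Lambda>"
    "\<And>i \<omega>. i < n \<Longrightarrow> \<omega> \<in> A i \<Longrightarrow> s \<omega> = c i \<omega>"
proof -
  obtain n :: nat and A c where "\<forall>i<n. A i \<in> sets \<Lambda> \<and> c i \<in> L" "disjoint_family_on A {..<n}"
    "(\<Union>i<n. A i) = space \<Lambda>" "\<forall>i<n. \<forall>\<omega>\<in>A i. s \<omega> = c i \<omega>"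
    using assms unfolding step_section_def by blast
  then show thesis
    by (intro that[of n A c]) auto
qed

lemma step_sectionI:
  assumes I: "finite I" and A: "\<And>i. i \<in> I \<Longrightarrow> A i \<in> sets \<Lambda>" and c: "\<And>i. i \<in> I \<Longrightarrow> c i \<in> L"
    and disj: "disjoint_family_on A I" and cover: "(\<Union>i\<in>I. A i) = space \<Lambda>"
    and agree: "\<And>i \<omega>. i \<in> I \<Longrightarrow> \<omega> \<in> A i \<Longrightarrow> s \<omega> = c i \<omega>"
  shows "step_section \<Lambda> L s"
proof -
  obtain h where h: "bij_betw h {..<card I} I"
    using ex_bij_betw_nat_finite[OF I] by (auto simp: atLeast0LessThan)
  have "disjoint_family_on (A \<circ> h) {..<card I}"
    using disj bij_betw_imp_inj_on[OF h] bij_betwE[OF h]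
    unfolding disjoint_family_on_def inj_on_def by (metis comp_apply)
  moreover have "(\<Union>k<card I. A (h k)) = space \<Lambda>"
    using cover bij_betw_imp_surj_on[OF h] by (metis image_image)
  ultimately show ?thesis
    unfolding step_section_def using A c agree bij_betwE[OF h]
    by (intro exI[of _ "card I"] exI[of _ "A \<circ> h"] exI[of _ "c \<circ> h"]) auto
qed

lemma step_section_sets:
  assumes "step_section \<Lambda> L s" "\<omega> \<in> space \<Lambda>"
  shows "s \<omega> \<in> sets (M \<omega>)"
proof -
  obtain n :: nat and A c where "\<And>i. i < n \<Longrightarrow> c i \<in> L" "(\<Union>i<n. A i) = space \<Lambda>"
    "\<And>i \<omega>. i < n \<Longrightarrow> \<omega> \<in> A i \<Longrightarrow> s \<omega> = c i \<omega>"
    using assms(1) by (rule step_sectionE) (rule that)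
  then show ?thesis
    using assms(2) L_sets by (metis UN_E lessThan_iff)
qed

lemma step_section_binop:
  assumes s: "step_section \<Lambda> L s" and t: "step_section \<Lambda> L t"
    and \<Phi>: "\<And>a b. a \<in> L \<Longrightarrow> b \<in> L \<Longrightarrow> \<exists>e\<in>L. \<forall>\<omega>\<in>space \<Lambda>. e \<omega> = \<Phi> \<omega> (a \<omega>) (b \<omega>)"
  shows "step_section \<Lambda> L (\<lambda>\<omega>. \<Phi> \<omega> (s \<omega>) (t \<omega>))"
proof -
  obtain n :: nat and A a where A: "\<And>i. i < n \<Longrightarrow> A i \<in> sets \<Lambda>" "\<And>i. i < n \<Longrightarrow> a i \<in> L"
    "disjoint_family_on A {..<n}" "(\<Union>i<n. A i) = space \<Lambda>"
    "\<And>i \<omega>. i < n \<Longrightarrow> \<omega> \<in> A i \<Longrightarrow> s \<omega> = a i \<omega>"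
    using s by (rule step_sectionE) (rule that)
  obtain m :: nat and B b where B: "\<And>j. j < m \<Longrightarrow> B j \<in> sets \<Lambda>" "\<And>j. j < m \<Longrightarrow> b j \<in> L"
    "disjoint_family_on B {..<m}" "(\<Union>j<m. B j) = space \<Lambda>"
    "\<And>j \<omega>. j < m \<Longrightarrow> \<omega> \<in> B j \<Longrightarrow> t \<omega> = b j \<omega>"
    using t by (rule step_sectionE) (rule that)
  have "\<forall>p\<in>{..<n} \<times> {..<m}. \<exists>e\<in>L. \<forall>\<omega>\<in>space \<Lambda>. e \<omega> = \<Phi> \<omega> (a (fst p) \<omega>) (b (snd p) \<omega>)"
    using A(2) B(2) \<Phi> by auto
  then obtain e where e: "\<And>p. p \<in> {..<n} \<times> {..<m} \<Longrightarrow> e p \<in> L"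
    "\<And>p \<omega>. p \<in> {..<n} \<times> {..<m} \<Longrightarrow> \<omega> \<in> space \<Lambda> \<Longrightarrow> e p \<omega> = \<Phi> \<omega> (a (fst p) \<omega>) (b (snd p) \<omega>)"
    by metis
  show ?thesis
  proof (rule step_sectionI[where I="{..<n} \<times> {..<m}" and A="\<lambda>(i, j). A i \<inter> B j" and c=e])
    show "disjoint_family_on (\<lambda>(i, j). A i \<inter> B j) ({..<n} \<times> {..<m})"
      using A(3) B(3) unfolding disjoint_family_on_def by fastforce
    show "(\<Union>p\<in>{..<n} \<times> {..<m}. (\<lambda>(i, j). A i \<inter> B j) p) = space \<Lambda>"
      using A(4) B(4) by fastforce
    show "\<Phi> \<omega> (s \<omega>) (t \<omega>) = e p \<omega>"
      if "p \<in> {..<n} \<times> {..<m}" "\<omega> \<in> (\<lambda>(i, j). A i \<inter> B j) p" for p \<omega>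
      using that A(1,5) B(5) e(2) sets.sets_into_space by (cases p) fastforce
  qed (use A(1) B(1) e(1) in auto)
qed

lemma step_section_L:
  assumes "c \<in> L"
  shows "step_section \<Lambda> L c"
proof (rule step_sectionI[where I="{()}" and A="\<lambda>_. space \<Lambda>" and c="\<lambda>_. c"])
  show "disjoint_family_on (\<lambda>_. space \<Lambda>) {()}"
    by (simp add: disjoint_family_on_def)
qed (simp_all add: assms)

lemma step_section_Un:
  assumes "step_section \<Lambda> L s" "step_section \<Lambda> L t"
  shows "step_section \<Lambda> L (\<lambda>\<omega>. s \<omega> \<union> t \<omega>)"
proof (rule step_section_binop[OF assms])
  fix a b assume "a \<in> L" "b \<in> L"
  then show "\<exists>e\<in>L. \<forall>\<omega>\<in>space \<Lambda>. e \<omega> = a \<omega> \<union> b \<omega>"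
    by (intro bexI[of _ "\<lambda>\<omega>. a \<omega> \<union> b \<omega>"] L_Un) simp_all
qed

lemma step_section_compl:
  assumes "step_section \<Lambda> L s"
  shows "step_section \<Lambda> L (\<lambda>\<omega>. space (M \<omega>) - s \<omega>)"
proof (rule step_section_binop[OF assms assms, where \<Phi>="\<lambda>\<omega> a b. space (M \<omega>) - a"])
  fix a b assume "a \<in> L"
  then show "\<exists>e\<in>L. \<forall>\<omega>\<in>space \<Lambda>. e \<omega> = space (M \<omega>) - a \<omega>"
    by (intro bexI[of _ "\<lambda>\<omega>. space (M \<omega>) - a \<omega>"] L_compl) simp_all
qed

lemma step_section_symdiff:
  assumes "step_section \<Lambda> L s" "step_section \<Lambda> L t"
  shows "step_section \<Lambda> L (\<lambda>\<omega>. (s \<omega> - t \<omega>) \<union> (t \<omega> - s \<omega>))"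
  using step_section_binop[OF assms L_symdiff] .

lemma step_section_measure_borel:
  assumes "step_section \<Lambda> L s"
  shows "(\<lambda>\<omega>. measure (M \<omega>) (s \<omega>)) \<in> borel_measurable \<Lambda>"
proof -
  obtain n :: nat and A c where A: "\<And>i. i < n \<Longrightarrow> A i \<in> sets \<Lambda>" "\<And>i. i < n \<Longrightarrow> c i \<in> L"
    "disjoint_family_on A {..<n}" "(\<Union>i<n. A i) = space \<Lambda>"
    "\<And>i \<omega>. i < n \<Longrightarrow> \<omega> \<in> A i \<Longrightarrow> s \<omega> = c i \<omega>"
    using assms by (rule step_sectionE) (rule that)
  have "measure (M \<omega>) (s \<omega>) = (\<Sum>i<n. indicator (A i) \<omega> * measure (M \<omega>) (c i \<omega>))"
    if "\<omega> \<in> space \<Lambda>" for \<omega>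
  proof -
    have "\<omega> \<in> (\<Union>i<n. A i)"
      using A(4) that by simp
    then obtain i where i: "i < n" "\<omega> \<in> A i"
      by blast
    have "indicator (A j) \<omega> * measure (M \<omega>) (c j \<omega>) = (if j = i then measure (M \<omega>) (c i \<omega>) else 0)"
      if "j < n" for j
      using A(3) i that unfolding disjoint_family_on_def by (auto simp: indicator_def)
    then have "(\<Sum>j<n. indicator (A j) \<omega> * measure (M \<omega>) (c j \<omega>)) = measure (M \<omega>) (c i \<omega>)"
      using i(1) by simp
    then show ?thesis
      using A(5) i by simp
  qed
  moreover have "(\<lambda>\<omega>. \<Sum>i<n. indicator (A i) \<omega> * measure (M \<omega>) (c i \<omega>)) \<in> borel_measurable \<Lambda>"
    using A(1,2) L_measure_borel by (intro borel_measurable_sum borel_measurable_times borel_measurable_indicator) auto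
  ultimately show ?thesis
    by (simp cong: measurable_cong)
qed

lemma step_section_rho_borel:
  assumes "step_section \<Lambda> L s" "step_section \<Lambda> L t"
  shows "(\<lambda>\<omega>. rho (M \<omega>) (s \<omega>) (t \<omega>)) \<in> borel_measurable \<Lambda>"
  unfolding rho_def using step_section_measure_borel[OF step_section_symdiff[OF assms]] .

lemma meas_bool_section_sets:
  "meas_bool_section \<Lambda> M L e \<Longrightarrow> \<omega> \<in> space \<Lambda> \<Longrightarrow> e \<omega> \<in> sets (M \<omega>)"
  unfolding meas_bool_section_def by blast

lemma meas_bool_section_subset_space:
  "meas_bool_section \<Lambda> M L e \<Longrightarrow> \<omega> \<in> space \<Lambda> \<Longrightarrow> e \<omega> \<subseteq> space (M \<omega>)"
  using meas_bool_section_sets sets.sets_into_space by metis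

lemma meas_bool_sectionE:
  assumes "meas_bool_section \<Lambda> M L e"
  obtains s :: "nat \<Rightarrow> 'a \<Rightarrow> 'b set" where "\<And>k. step_section \<Lambda> L (s k)"
    "AE \<omega> in \<Lambda>. (\<lambda>k. rho (M \<omega>) (s k \<omega>) (e \<omega>)) \<longlonglongrightarrow> 0"
  using assms unfolding meas_bool_section_def by blast

lemma meas_bool_sectionI:
  fixes s :: "nat \<Rightarrow> 'a \<Rightarrow> 'b set"
  assumes "\<And>\<omega>. \<omega> \<in> space \<Lambda> \<Longrightarrow> e \<omega> \<in> sets (M \<omega>)" "\<And>k. step_section \<Lambda> L (s k)"
    "AE \<omega> in \<Lambda>. (\<lambda>k. rho (M \<omega>) (s k \<omega>) (e \<omega>)) \<longlonglongrightarrow> 0"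
  shows "meas_bool_section \<Lambda> M L e"
  unfolding meas_bool_section_def using assms by (intro conjI ballI exI[of _ s]) auto

lemma meas_bool_section_cong:
  assumes "meas_bool_section \<Lambda> M L e" "\<And>\<omega>. \<omega> \<in> space \<Lambda> \<Longrightarrow> e \<omega> = e' \<omega>"
  shows "meas_bool_section \<Lambda> M L e'"
proof -
  obtain s :: "nat \<Rightarrow> 'a \<Rightarrow> 'b set" where s: "\<And>k. step_section \<Lambda> L (s k)"
    and conv: "AE \<omega> in \<Lambda>. (\<lambda>k. rho (M \<omega>) (s k \<omega>) (e \<omega>)) \<longlonglongrightarrow> 0"
    using assms(1) by (rule meas_bool_sectionE) (rule that)
  have "AE \<omega> in \<Lambda>. (\<lambda>k. rho (M \<omega>) (s k \<omega>) (e' \<omega>)) \<longlonglongrightarrow> 0"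
    using conv AE_space by eventually_elim (simp add: assms(2))
  then show ?thesis
    using s meas_bool_section_sets[OF assms(1)] assms(2) by (intro meas_bool_sectionI) auto
qed

lemma meas_bool_section_empty: "meas_bool_section \<Lambda> M L (\<lambda>\<omega>. {})"
  by (rule meas_bool_sectionI[where s="\<lambda>_. \<lambda>\<omega>. {}"]) (auto intro: step_section_L L_empty simp: rho_def)

lemma meas_bool_section_compl:
  assumes e: "meas_bool_section \<Lambda> M L e"
  shows "meas_bool_section \<Lambda> M L (\<lambda>\<omega>. space (M \<omega>) - e \<omega>)"
proof -
  obtain s :: "nat \<Rightarrow> 'a \<Rightarrow> 'b set" where s: "\<And>k. step_section \<Lambda> L (s k)"
    and conv: "AE \<omega> in \<Lambda>. (\<lambda>k. rho (M \<omega>) (s k \<omega>) (e \<omega>)) \<longlonglongrightarrow> 0"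
    using e by (rule meas_bool_sectionE) (rule that)
  have "AE \<omega> in \<Lambda>. (\<lambda>k. rho (M \<omega>) (space (M \<omega>) - s k \<omega>) (space (M \<omega>) - e \<omega>)) \<longlonglongrightarrow> 0"
    using conv AE_space
  proof eventually_elim
    case (elim \<omega>)
    have "rho (M \<omega>) (space (M \<omega>) - s k \<omega>) (space (M \<omega>) - e \<omega>) = rho (M \<omega>) (s k \<omega>) (e \<omega>)" for k
      using step_section_sets[OF s elim(2)] meas_bool_section_subset_space[OF e elim(2)]
      by (intro rho_compl) (auto dest: sets.sets_into_space)
    then show ?case
      using elim(1) by simp
  qed
  then show ?thesis
    using meas_bool_section_sets[OF e] step_section_compl[OF s] by (intro meas_bool_sectionI) auto
qed

lemma meas_bool_section_Un:
  assumes a: "meas_bool_section \<Lambda> M L a" and b: "meas_bool_section \<Lambda> M L b"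
  shows "meas_bool_section \<Lambda> M L (\<lambda>\<omega>. a \<omega> \<union> b \<omega>)"
proof -
  obtain s :: "nat \<Rightarrow> 'a \<Rightarrow> 'b set" where s: "\<And>k. step_section \<Lambda> L (s k)"
    and conv_s: "AE \<omega> in \<Lambda>. (\<lambda>k. rho (M \<omega>) (s k \<omega>) (a \<omega>)) \<longlonglongrightarrow> 0"
    using a by (rule meas_bool_sectionE) (rule that)
  obtain t :: "nat \<Rightarrow> 'a \<Rightarrow> 'b set" where t: "\<And>k. step_section \<Lambda> L (t k)"
    and conv_t: "AE \<omega> in \<Lambda>. (\<lambda>k. rho (M \<omega>) (t k \<omega>) (b \<omega>)) \<longlonglongrightarrow> 0"
    using b by (rule meas_bool_sectionE) (rule that)
  have "AE \<omega> in \<Lambda>. (\<lambda>k. rho (M \<omega>) (s k \<omega> \<union> t k \<omega>) (a \<omega> \<union> b \<omega>)) \<longlonglongrightarrow> 0"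
    using conv_s conv_t AE_space
  proof eventually_elim
    case (elim \<omega>)
    have "rho (M \<omega>) (s k \<omega> \<union> t k \<omega>) (a \<omega> \<union> b \<omega>) \<le> rho (M \<omega>) (s k \<omega>) (a \<omega>) + rho (M \<omega>) (t k \<omega>) (b \<omega>)" for k
      using finite_measure_fibre[OF elim(3)] step_section_sets[OF s elim(3)] meas_bool_section_sets[OF a elim(3)]
        step_section_sets[OF t elim(3)] meas_bool_section_sets[OF b elim(3)]
      by (rule rho_Un_le)
    then show ?case
      using rho_nonneg elim(1,2) by (rule tendsto_0_if_le_add)
  qed
  then show ?thesis
    using meas_bool_section_sets[OF a] meas_bool_section_sets[OF b] step_section_Un[OF s t]
    by (intro meas_bool_sectionI) auto
qed

lemma meas_bool_section_Int:
  assumes a: "meas_bool_section \<Lambda> M L a" and b: "meas_bool_section \<Lambda> M L b"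
  shows "meas_bool_section \<Lambda> M L (\<lambda>\<omega>. a \<omega> \<inter> b \<omega>)"
proof (rule meas_bool_section_cong)
  show "meas_bool_section \<Lambda> M L (\<lambda>\<omega>. space (M \<omega>) - ((space (M \<omega>) - a \<omega>) \<union> (space (M \<omega>) - b \<omega>)))"
    by (intro meas_bool_section_compl meas_bool_section_Un a b)
  show "space (M \<omega>) - ((space (M \<omega>) - a \<omega>) \<union> (space (M \<omega>) - b \<omega>)) = a \<omega> \<inter> b \<omega>"
    if "\<omega> \<in> space \<Lambda>" for \<omega>
    using meas_bool_section_subset_space[OF a that] meas_bool_section_subset_space[OF b that] by auto
qed

lemma meas_bool_section_UN_lessThan:
  fixes n :: nat
  assumes "\<And>k. meas_bool_section \<Lambda> M L (e k)"
  shows "meas_bool_section \<Lambda> M L (\<lambda>\<omega>. \<Union>k<n. e k \<omega>)"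
proof (induction n)
  case 0
  then show ?case by (simp add: meas_bool_section_empty)
next
  case (Suc n)
  then show ?case
    using meas_bool_section_Un[OF Suc assms] by (simp add: lessThan_Suc Un_commute)
qed

text \<open>The functions \<open>\<omega> \<mapsto> rho (M \<omega>) (w N j \<omega>) (F N \<omega>)\<close> need not be measurable, so they are
  replaced by the measurable functions \<open>X N j\<close>, which agree with them a.e., before a diagonal
  sequence is extracted.\<close>
lemma meas_bool_section_AE_limit:
  assumes F: "\<And>N. meas_bool_section \<Lambda> M L (F N)"
    and E_sets: "\<And>\<omega>. \<omega> \<in> space \<Lambda> \<Longrightarrow> E \<omega> \<in> sets (M \<omega>)"
    and conv: "AE \<omega> in \<Lambda>. (\<lambda>N. rho (M \<omega>) (F N \<omega>) (E \<omega>)) \<longlonglongrightarrow> 0"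
  shows "meas_bool_section \<Lambda> M L E"
proof -
  interpret \<Lambda>: finite_measure \<Lambda>
    by (rule finite_measure_base)
  have "\<forall>N. \<exists>s. (\<forall>j. step_section \<Lambda> L (s j)) \<and> (AE \<omega> in \<Lambda>. (\<lambda>j. rho (M \<omega>) (s j \<omega>) (F N \<omega>)) \<longlonglongrightarrow> 0)"
    using F unfolding meas_bool_section_def by blast
  then obtain w :: "nat \<Rightarrow> nat \<Rightarrow> 'a \<Rightarrow> 'b set"
    where "\<forall>N. (\<forall>j. step_section \<Lambda> L (w N j)) \<and> (AE \<omega> in \<Lambda>. (\<lambda>j. rho (M \<omega>) (w N j \<omega>) (F N \<omega>)) \<longlonglongrightarrow> 0)"
    by (auto dest: choice)
  then have w: "\<And>N j. step_section \<Lambda> L (w N j)"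
    and w_conv: "\<And>N. AE \<omega> in \<Lambda>. (\<lambda>j. rho (M \<omega>) (w N j \<omega>) (F N \<omega>)) \<longlonglongrightarrow> 0"
    by simp_all
  define X where "X N j \<omega> = lim (\<lambda>l. rho (M \<omega>) (w N j \<omega>) (w N l \<omega>))" for N j \<omega>
  have X_borel: "X N j \<in> borel_measurable \<Lambda>" for N j
    unfolding X_def by (intro borel_measurable_lim_metric step_section_rho_borel w)
  have X_eq: "AE \<omega> in \<Lambda>. \<forall>j. X N j \<omega> = rho (M \<omega>) (w N j \<omega>) (F N \<omega>)" for N
    using w_conv[of N] AE_space
  proof eventually_elim
    case (elim \<omega>)
    then show ?case
      unfolding X_def
      by (intro allI limI rho_tendsto_if_rho_tendsto_0 finite_measure_fibre step_section_sets[OF w]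
          meas_bool_section_sets[OF F])
  qed
  have "AE \<omega> in \<Lambda>. (\<lambda>j. X N j \<omega>) \<longlonglongrightarrow> 0" for N
    using X_eq[of N] w_conv[of N] by eventually_elim simp
  then obtain J where J: "AE \<omega> in \<Lambda>. (\<lambda>N. X N (J N) \<omega>) \<longlonglongrightarrow> 0"
    by (rule \<Lambda>.AE_tendsto_diagonal[OF X_borel]) (rule that)
  have "AE \<omega> in \<Lambda>. \<forall>N. X N (J N) \<omega> = rho (M \<omega>) (w N (J N) \<omega>) (F N \<omega>)"
    using X_eq by (simp add: AE_all_countable)
  then have "AE \<omega> in \<Lambda>. (\<lambda>N. rho (M \<omega>) (w N (J N) \<omega>) (E \<omega>)) \<longlonglongrightarrow> 0"
    using J conv AE_space
  proof eventually_elim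
    case (elim \<omega>)
    have "rho (M \<omega>) (w N (J N) \<omega>) (E \<omega>) \<le> X N (J N) \<omega> + rho (M \<omega>) (F N \<omega>) (E \<omega>)" for N
      using rho_triangle[OF finite_measure_fibre[OF elim(4)] step_section_sets[OF w elim(4)]
          meas_bool_section_sets[OF F elim(4)] E_sets[OF elim(4)]] elim(1)
      by simp
    then show ?case
      using rho_nonneg elim(2,3) by (rule tendsto_0_if_le_add)
  qed
  then show ?thesis
    using E_sets w by (intro meas_bool_sectionI[where s="\<lambda>N. w N (J N)"])
qed

lemma meas_bool_section_UN:
  fixes e :: "nat \<Rightarrow> 'a \<Rightarrow> 'b set"
  assumes e: "\<And>k. meas_bool_section \<Lambda> M L (e k)"
  shows "meas_bool_section \<Lambda> M L (\<lambda>\<omega>. \<Union>k. e k \<omega>)"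
proof -
  have UN_sets: "(\<Union>k\<in>K. e k \<omega>) \<in> sets (M \<omega>)" if "\<omega> \<in> space \<Lambda>" for K \<omega>
    using meas_bool_section_sets[OF e that] by (intro sets.countable_UN) auto
  have "(\<lambda>n. rho (M \<omega>) (\<Union>k<n. e k \<omega>) (\<Union>k. e k \<omega>)) \<longlonglongrightarrow> 0" if \<omega>: "\<omega> \<in> space \<Lambda>" for \<omega>
  proof -
    interpret M\<omega>: finite_measure "M \<omega>"
      using \<omega> by (rule finite_measure_fibre)
    have lim: "(\<lambda>n. measure (M \<omega>) ((\<Union>k. e k \<omega>) - (\<Union>k<n. e k \<omega>)))
        \<longlonglongrightarrow> measure (M \<omega>) (\<Inter>n. (\<Union>k. e k \<omega>) - (\<Union>k<n. e k \<omega>))"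
      using UN_sets[OF \<omega>] by (intro M\<omega>.finite_Lim_measure_decseq) (auto simp: decseq_def)
    have empty: "(\<Inter>n. (\<Union>k. e k \<omega>) - (\<Union>k<n. e k \<omega>)) = {}"
    proof -
      have "x \<notin> (\<Union>k. e k \<omega>) - (\<Union>k<Suc k. e k \<omega>)" if "x \<in> e k \<omega>" for x k
        using that by blast
      then show ?thesis
        by blast
    qed
    have rho_eq: "rho (M \<omega>) (\<Union>k<n. e k \<omega>) (\<Union>k. e k \<omega>) = measure (M \<omega>) ((\<Union>k. e k \<omega>) - (\<Union>k<n. e k \<omega>))" for n
    proof -
      have "((\<Union>k<n. e k \<omega>) - (\<Union>k. e k \<omega>)) \<union> ((\<Union>k. e k \<omega>) - (\<Union>k<n. e k \<omega>))
          = (\<Union>k. e k \<omega>) - (\<Union>k<n. e k \<omega>)"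
        by blast
      then show ?thesis
        by (simp only: rho_def)
    qed
    show ?thesis
      using lim unfolding empty rho_eq by simp
  qed
  then show ?thesis
    using UN_sets[where K=UNIV] by (intro meas_bool_section_AE_limit[OF meas_bool_section_UN_lessThan[OF e]] AE_I2) auto
qed

lemma meas_bool_section_INT:
  fixes e :: "nat \<Rightarrow> 'a \<Rightarrow> 'b set"
  assumes e: "\<And>k. meas_bool_section \<Lambda> M L (e k)"
  shows "meas_bool_section \<Lambda> M L (\<lambda>\<omega>. \<Inter>k. e k \<omega>)"
proof (rule meas_bool_section_cong)
  show "meas_bool_section \<Lambda> M L (\<lambda>\<omega>. space (M \<omega>) - (\<Union>k. space (M \<omega>) - e k \<omega>))"
    by (intro meas_bool_section_compl meas_bool_section_UN e)
  show "space (M \<omega>) - (\<Union>k. space (M \<omega>) - e k \<omega>) = (\<Inter>k. e k \<omega>)" if "\<omega> \<in> space \<Lambda>" for \<omega>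
    using meas_bool_section_subset_space[OF e that] by blast
qed

lemma L0_section_borel: "L0_section \<Lambda> M L f \<Longrightarrow> \<omega> \<in> space \<Lambda> \<Longrightarrow> f \<omega> \<in> borel_measurable (M \<omega>)"
  unfolding L0_section_def by blast

lemma L0_section_less:
  "L0_section \<Lambda> M L f \<Longrightarrow> meas_bool_section \<Lambda> M L (\<lambda>\<omega>. {x \<in> space (M \<omega>). f \<omega> x < t})"
  unfolding L0_section_def by blast

lemma L0_sectionI:
  assumes "\<And>\<omega>. \<omega> \<in> space \<Lambda> \<Longrightarrow> f \<omega> \<in> borel_measurable (M \<omega>)"
    and "\<And>t. meas_bool_section \<Lambda> M L (\<lambda>\<omega>. {x \<in> space (M \<omega>). f \<omega> x < t})"
  shows "L0_section \<Lambda> M L f"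
  unfolding L0_section_def using assms by blast

lemma meas_bool_section_INF_less:
  fixes f :: "nat \<Rightarrow> 'a \<Rightarrow> 'b \<Rightarrow> real"
  assumes f: "\<And>n. L0_section \<Lambda> M L (f n)"
  shows "meas_bool_section \<Lambda> M L (\<lambda>\<omega>. {x \<in> space (M \<omega>). (INF n. ereal (f n \<omega> x)) < ereal t})"
proof (rule meas_bool_section_cong)
  show "meas_bool_section \<Lambda> M L (\<lambda>\<omega>. \<Union>n. {x \<in> space (M \<omega>). f n \<omega> x < t})"
    using f by (intro meas_bool_section_UN L0_section_less)
  show "(\<Union>n. {x \<in> space (M \<omega>). f n \<omega> x < t}) = {x \<in> space (M \<omega>). (INF n. ereal (f n \<omega> x)) < ereal t}"
    for \<omega>
    by (auto simp: INF_less_iff)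
qed

lemma meas_bool_section_INF_eq_MInfty:
  fixes f :: "nat \<Rightarrow> 'a \<Rightarrow> 'b \<Rightarrow> real"
  assumes f: "\<And>n. L0_section \<Lambda> M L (f n)"
  shows "meas_bool_section \<Lambda> M L (\<lambda>\<omega>. {x \<in> space (M \<omega>). (INF n. ereal (f n \<omega> x)) = -\<infinity>})"
proof (rule meas_bool_section_cong)
  show "meas_bool_section \<Lambda> M L
      (\<lambda>\<omega>. \<Inter>k::nat. {x \<in> space (M \<omega>). (INF n. ereal (f n \<omega> x)) < ereal (- real k)})"
    using f by (intro meas_bool_section_INT meas_bool_section_INF_less)
  show "(\<Inter>k::nat. {x \<in> space (M \<omega>). (INF n. ereal (f n \<omega> x)) < ereal (- real k)})
      = {x \<in> space (M \<omega>). (INF n. ereal (f n \<omega> x)) = -\<infinity>}" for \<omega>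
    using ereal_eq_MInfty_iff_less_all by blast
qed

lemma L0_section_max_INF:
  fixes f :: "nat \<Rightarrow> 'a \<Rightarrow> 'b \<Rightarrow> real"
  assumes g: "L0_section \<Lambda> M L g" and f: "\<And>n. L0_section \<Lambda> M L (f n)"
  shows "L0_section \<Lambda> M L (\<lambda>\<omega> x. real_of_ereal (max (ereal (g \<omega> x)) (INF n. ereal (f n \<omega> x))))"
proof (rule L0_sectionI)
  fix \<omega> assume "\<omega> \<in> space \<Lambda>"
  then show "(\<lambda>x. real_of_ereal (max (ereal (g \<omega> x)) (INF n. ereal (f n \<omega> x)))) \<in> borel_measurable (M \<omega>)"
    using L0_section_borel[OF g] L0_section_borel[OF f] by measurable
next
  fix t
  have "real_of_ereal (max (ereal (g \<omega> x)) (INF n. ereal (f n \<omega> x))) < t \<longleftrightarrow>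
      g \<omega> x < t \<and> (INF n. ereal (f n \<omega> x)) < ereal t" for \<omega> x
  proof -
    have "(INF n. ereal (f n \<omega> x)) \<le> ereal (f 0 \<omega> x)"
      by (rule INF_lower) simp
    then have "ereal (real_of_ereal (max (ereal (g \<omega> x)) (INF n. ereal (f n \<omega> x))))
        = max (ereal (g \<omega> x)) (INF n. ereal (f n \<omega> x))"
      by (rule ereal_real_of_ereal_max)
    then show ?thesis
      by (metis ereal_less_eq(3) less_ereal.simps(1) max_less_iff_conj)
  qed
  then have "{x \<in> space (M \<omega>). real_of_ereal (max (ereal (g \<omega> x)) (INF n. ereal (f n \<omega> x))) < t}
      = {x \<in> space (M \<omega>). g \<omega> x < t} \<inter> {x \<in> space (M \<omega>). (INF n. ereal (f n \<omega> x)) < ereal t}" for \<omega>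
    by blast
  then show "meas_bool_section \<Lambda> M L
      (\<lambda>\<omega>. {x \<in> space (M \<omega>). real_of_ereal (max (ereal (g \<omega> x)) (INF n. ereal (f n \<omega> x))) < t})"
    using meas_bool_section_Int[OF L0_section_less[OF g] meas_bool_section_INF_less[OF f]] by simp
qed

text \<open>The value \<open>f 0\<close> where the infimum is \<open>-\<infinity>\<close> is arbitrary; it only matters that the
  result is real-valued.\<close>
lemma L0_section_INF:
  fixes f :: "nat \<Rightarrow> 'a \<Rightarrow> 'b \<Rightarrow> real"
  assumes f: "\<And>n. L0_section \<Lambda> M L (f n)"
  shows "L0_section \<Lambda> M L (\<lambda>\<omega> x. if (INF n. ereal (f n \<omega> x)) = -\<infinity> then f 0 \<omega> x
    else real_of_ereal (INF n. ereal (f n \<omega> x)))"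
proof (rule L0_sectionI)
  fix \<omega> assume "\<omega> \<in> space \<Lambda>"
  then show "(\<lambda>x. if (INF n. ereal (f n \<omega> x)) = -\<infinity> then f 0 \<omega> x
      else real_of_ereal (INF n. ereal (f n \<omega> x))) \<in> borel_measurable (M \<omega>)"
    using L0_section_borel[OF f] by measurable
next
  fix t
  let ?m = "\<lambda>\<omega> x. INF n. ereal (f n \<omega> x)"
  have "(if ?m \<omega> x = -\<infinity> then f 0 \<omega> x else real_of_ereal (?m \<omega> x)) < t \<longleftrightarrow>
      (?m \<omega> x \<noteq> -\<infinity> \<and> ?m \<omega> x < ereal t) \<or> (?m \<omega> x = -\<infinity> \<and> f 0 \<omega> x < t)" for \<omega> x
  proof -
    have "?m \<omega> x \<le> ereal (f 0 \<omega> x)"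
      by (rule INF_lower) simp
    then show ?thesis
      by (cases "?m \<omega> x") auto
  qed
  then have "{x \<in> space (M \<omega>). (if ?m \<omega> x = -\<infinity> then f 0 \<omega> x else real_of_ereal (?m \<omega> x)) < t}
      = ({x \<in> space (M \<omega>). ?m \<omega> x < ereal t} \<inter> (space (M \<omega>) - {x \<in> space (M \<omega>). ?m \<omega> x = -\<infinity>}))
        \<union> ({x \<in> space (M \<omega>). ?m \<omega> x = -\<infinity>} \<inter> {x \<in> space (M \<omega>). f 0 \<omega> x < t})" for \<omega>
    by blast
  moreover have "meas_bool_section \<Lambda> M L (\<lambda>\<omega>.
      ({x \<in> space (M \<omega>). ?m \<omega> x < ereal t} \<inter> (space (M \<omega>) - {x \<in> space (M \<omega>). ?m \<omega> x = -\<infinity>}))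
        \<union> ({x \<in> space (M \<omega>). ?m \<omega> x = -\<infinity>} \<inter> {x \<in> space (M \<omega>). f 0 \<omega> x < t}))"
    using f by (intro meas_bool_section_Un meas_bool_section_Int meas_bool_section_compl
        meas_bool_section_INF_less meas_bool_section_INF_eq_MInfty L0_section_less)
  ultimately show "meas_bool_section \<Lambda> M L (\<lambda>\<omega>. {x \<in> space (M \<omega>).
      (if ?m \<omega> x = -\<infinity> then f 0 \<omega> x else real_of_ereal (?m \<omega> x)) < t})"
    by simp
qed

lemma is_inf_hat_imp_AE_eq_INF:
  assumes f: "\<And>n. L0_section \<Lambda> M L (f n)" and inf: "is_inf_hat \<Lambda> M L f g"
  shows "AE \<omega> in \<Lambda>. AE x in M \<omega>. ereal (g \<omega> x) = (INF n. ereal (f n \<omega> x))"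
proof -
  have g: "L0_section \<Lambda> M L g" and g_le: "\<And>n. hat_le \<Lambda> M g (f n)"
    and greatest: "\<And>h. L0_section \<Lambda> M L h \<Longrightarrow> \<forall>n. hat_le \<Lambda> M h (f n) \<Longrightarrow> hat_le \<Lambda> M h g"
    using inf unfolding is_inf_hat_def by blast+
  define h where "h \<omega> x = real_of_ereal (max (ereal (g \<omega> x)) (INF n. ereal (f n \<omega> x)))" for \<omega> x
  have h_eq: "ereal (h \<omega> x) = max (ereal (g \<omega> x)) (INF n. ereal (f n \<omega> x))" for \<omega> x
  proof -
    have "(INF n. ereal (f n \<omega> x)) \<le> ereal (f 0 \<omega> x)"
      by (rule INF_lower) simp
    then show ?thesis
      unfolding h_def by (rule ereal_real_of_ereal_max)
  qed
  have "hat_le \<Lambda> M h (f n)" for n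
    using g_le[of n] unfolding hat_le_def
  proof eventually_elim
    case (elim \<omega>)
    then show ?case
    proof eventually_elim
      case (elim x)
      have "ereal (h \<omega> x) \<le> ereal (f n \<omega> x)"
        unfolding h_eq using elim by (intro max.boundedI INF_lower) simp_all
      then show ?case
        by simp
    qed
  qed
  moreover have "L0_section \<Lambda> M L h"
    unfolding h_def using g f by (rule L0_section_max_INF)
  ultimately have "hat_le \<Lambda> M h g"
    using greatest by blast
  moreover have "AE \<omega> in \<Lambda>. AE x in M \<omega>. \<forall>n. g \<omega> x \<le> f n \<omega> x"
    using g_le unfolding hat_le_def by (simp add: AE_all_countable)
  ultimately show ?thesis
    unfolding hat_le_def
  proof eventually_elim
    case (elim \<omega>)
    then show ?case
    proof eventually_elim
      case (elim x)
      have "(INF n. ereal (f n \<omega> x)) \<le> ereal (h \<omega> x)"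
        unfolding h_eq by simp
      also have "\<dots> \<le> ereal (g \<omega> x)"
        using elim(1) by simp
      finally show ?case
        using elim(2) by (intro antisym INF_greatest) simp_all
    qed
  qed
qed

lemma is_inf_hat_imp_AE_is_inf_L0:
  assumes f: "\<And>n. L0_section \<Lambda> M L (f n)" and inf: "is_inf_hat \<Lambda> M L f g"
  shows "AE \<omega> in \<Lambda>. is_inf_L0 (M \<omega>) (\<lambda>n. f n \<omega>) (g \<omega>)"
  using is_inf_hat_imp_AE_eq_INF[OF f inf] AE_space
proof eventually_elim
  case (elim \<omega>)
  have "L0_section \<Lambda> M L g"
    using inf unfolding is_inf_hat_def by blast
  then show ?case
    using elim(1) L0_section_borel[OF _ elim(2)] f by (simp add: is_inf_L0_iff_AE_eq_INF)
qed

lemma ex_is_inf_hat_if_AE_ex_is_inf_L0: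
  assumes f: "\<And>n. L0_section \<Lambda> M L (f n)"
    and fibres: "AE \<omega> in \<Lambda>. \<exists>h. is_inf_L0 (M \<omega>) (\<lambda>n. f n \<omega>) h"
  shows "\<exists>g. is_inf_hat \<Lambda> M L f g"
proof -
  define g where "g \<omega> x = (if (INF n. ereal (f n \<omega> x)) = -\<infinity> then f 0 \<omega> x
    else real_of_ereal (INF n. ereal (f n \<omega> x)))" for \<omega> x
  have "L0_section \<Lambda> M L g"
    unfolding g_def using f by (rule L0_section_INF)
  moreover have "AE \<omega> in \<Lambda>. AE x in M \<omega>. ereal (g \<omega> x) = (INF n. ereal (f n \<omega> x))"
    using fibres AE_space
  proof eventually_elim
    case (elim \<omega>)
    then obtain h where "is_inf_L0 (M \<omega>) (\<lambda>n. f n \<omega>) h"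
      by blast
    then have "AE x in M \<omega>. ereal (h x) = (INF n. ereal (f n \<omega> x))"
      using L0_section_borel[OF f elim(2)] by (simp add: is_inf_L0_iff_AE_eq_INF)
    then show ?case
    proof eventually_elim
      case (elim x)
      then show ?case
        unfolding g_def elim[symmetric] by simp
    qed
  qed
  ultimately show ?thesis
    using is_inf_hat_if_AE_eq_INF by blast
qed

end

theorem corollary3p2:
  fixes \<Lambda> :: "'a measure" and M :: "'a \<Rightarrow> 'b measure" and L :: "('a \<Rightarrow> 'b set) set"
    and f :: "nat \<Rightarrow> 'a \<Rightarrow> 'b \<Rightarrow> real"
  assumes "bool_bundle \<Lambda> M L"
    and "\<And>n. L0_section \<Lambda> M L (f n)"
  shows "((\<exists>g. is_inf_hat \<Lambda> M L f g) \<longleftrightarrow>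
            (AE \<omega> in \<Lambda>. \<exists>h. is_inf_L0 (M \<omega>) (\<lambda>n. f n \<omega>) h))
         \<and> (\<forall>g. is_inf_hat \<Lambda> M L f g \<longrightarrow> (AE \<omega> in \<Lambda>. is_inf_L0 (M \<omega>) (\<lambda>n. f n \<omega>) (g \<omega>)))"
proof -
  interpret boolean_bundle \<Lambda> M L
    by (rule boolean_bundle.intro) (rule assms(1))
  have hat_to_fibres: "AE \<omega> in \<Lambda>. is_inf_L0 (M \<omega>) (\<lambda>n. f n \<omega>) (g \<omega>)" if "is_inf_hat \<Lambda> M L f g" for g
    using assms(2) that by (rule is_inf_hat_imp_AE_is_inf_L0)
  have "AE \<omega> in \<Lambda>. \<exists>h. is_inf_L0 (M \<omega>) (\<lambda>n. f n \<omega>) h" if "is_inf_hat \<Lambda> M L f g" for g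
    using hat_to_fibres[OF that] by (rule eventually_mono) blast
  moreover note ex_is_inf_hat_if_AE_ex_is_inf_L0[of f, OF assms(2)]
  ultimately show ?thesis
    using hat_to_fibres by blast
qed

end
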